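(* Let $\xi\ge 1$ and let $W_K$ be a kernel walk with excess $\xi$, with induced tree $T(W_K)=(V,E)$. Then $|V|\le 3\xi-1$ and the number of simple edges of $T(W_K)$ is at most $2\xi-2$, and these bounds are tight. Consequently $K_\xi(u,v,z)$ is a polynomial of degree $2\xi-2$ in $u$, $3\xi-1$ in $v$ and $4\xi-2$ in $z$.
   Context: A tree walk of size $m$ and length $L$ is a sequence $W=(v_1,\dots,v_L)$ of elements of $[m]$ in which every element of $[m]$ occurs, such that the graph $T(W)$ with vertex set $[m]$ and edges $\{v_j,v_{j+1}\}$ ($1\le j<L$) and $\{v_L,v_1\}$ is a tree; $W$ is the closed walk $v_1\to\dots\to v_L\to v_1$ with root $v_1$; a root of degree 1 is also a leaf. Each edge is traversed $2k$ times ($k\ge1$); its excess is $k-1$; it is simple if $k=1$ and an excess edge if $k\ge2$. The excess of $W$ is the sum of the edge excesses, i.e. half its length minus the number of edges. A kernel walk is a tree walk such that: (i) no non-root leaf is incident to a simple edge; (ii) if the root is a leaf, its edge is an excess edge; (iii) no non-root vertex has degree exactly $2$ with both incident edges simple. $k_{\xi,s,2\ell}$ is the number of kernel walks of length $2\ell$, excess $\xi$, whose induced tree has $s$ simple edges, and \[ K_\xi(u,v,z)=\sum_{s,\ell\ge0}k_{\xi,s,2\ell}\,u^s\frac{v^{\ell-\xi+1}}{(\ell-\xi+1)!}z^\ell . \] *)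

theory Defs
  imports Complex_Main
begin

text \<open>Walks are lists W = [v_1, ..., v_L] of naturals; the vertex set [m] is {1..m}.
  Position j (0-based, j < L) carries the step {W!j, W!((j+1) mod L)}, so the closing
  step {v_L, v_1} is included.\<close>

definition step_edge :: "nat list \<Rightarrow> nat \<Rightarrow> nat set" where
  "step_edge W j = {W ! j, W ! ((j + 1) mod length W)}"

definition walk_edges :: "nat list \<Rightarrow> nat set set" where
  "walk_edges W = {step_edge W j | j. j < length W}"

definition adj :: "nat set set \<Rightarrow> (nat \<times> nat) set" where
  "adj E = {(a, b). {a, b} \<in> E}"

definition is_tree :: "nat set \<Rightarrow> nat set set \<Rightarrow> bool" where
  "is_tree V E \<longleftrightarrow> finite V \<and> V \<noteq> {}
     \<and> (\<forall>e\<in>E. \<exists>a b. a \<in> V \<and> b \<in> V \<and> a \<noteq> b \<and> e = {a, b})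
     \<and> (\<forall>a\<in>V. \<forall>b\<in>V. (a, b) \<in> (adj E)\<^sup>*)
     \<and> card E + 1 = card V"

definition tree_walk :: "nat \<Rightarrow> nat list \<Rightarrow> bool" where
  "tree_walk m W \<longleftrightarrow> W \<noteq> [] \<and> set W = {1..m} \<and> is_tree {1..m} (walk_edges W)"

definition trav :: "nat list \<Rightarrow> nat set \<Rightarrow> nat" where
  "trav W e = card {j. j < length W \<and> step_edge W j = e}"

definition edge_k :: "nat list \<Rightarrow> nat set \<Rightarrow> nat" where
  "edge_k W e = trav W e div 2"

definition simple_edge :: "nat list \<Rightarrow> nat set \<Rightarrow> bool" where
  "simple_edge W e \<longleftrightarrow> edge_k W e = 1"

definition excess_edge :: "nat list \<Rightarrow> nat set \<Rightarrow> bool" where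
  "excess_edge W e \<longleftrightarrow> edge_k W e \<ge> 2"

definition walk_excess :: "nat list \<Rightarrow> nat" where
  "walk_excess W = (\<Sum>e\<in>walk_edges W. edge_k W e - 1)"

definition num_simple :: "nat list \<Rightarrow> nat" where
  "num_simple W = card {e \<in> walk_edges W. simple_edge W e}"

definition vdeg :: "nat list \<Rightarrow> nat \<Rightarrow> nat" where
  "vdeg W v = card {e \<in> walk_edges W. v \<in> e}"

definition kernel_walk :: "nat \<Rightarrow> nat list \<Rightarrow> bool" where
  "kernel_walk m W \<longleftrightarrow> tree_walk m W
     \<and> (\<forall>v\<in>{1..m}. v \<noteq> hd W \<and> vdeg W v = 1 \<longrightarrow>
           (\<forall>e\<in>walk_edges W. v \<in> e \<longrightarrow> \<not> simple_edge W e))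
     \<and> (vdeg W (hd W) = 1 \<longrightarrow> (\<forall>e\<in>walk_edges W. hd W \<in> e \<longrightarrow> excess_edge W e))
     \<and> (\<forall>v\<in>{1..m}. v \<noteq> hd W \<and> vdeg W v = 2 \<longrightarrow>
           \<not> (\<forall>e\<in>walk_edges W. v \<in> e \<longrightarrow> simple_edge W e))"

definition kcount :: "nat \<Rightarrow> nat \<Rightarrow> nat \<Rightarrow> nat" where
  "kcount \<xi> s l = card {W. (\<exists>m. kernel_walk m W) \<and> length W = 2 * l
                          \<and> walk_excess W = \<xi> \<and> num_simple W = s}"

text \<open>Coefficient of u^s v^j z^l in K_xi(u,v,z).\<close>
definition K_coeff :: "nat \<Rightarrow> nat \<Rightarrow> nat \<Rightarrow> nat \<Rightarrow> real" where
  "K_coeff \<xi> s j l = (if j + \<xi> = l + 1 then real (kcount \<xi> s l) / fact j else 0)"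

definition K_support :: "nat \<Rightarrow> (nat \<times> nat \<times> nat) set" where
  "K_support \<xi> = {(s, j, l). K_coeff \<xi> s j l \<noteq> 0}"

end

(*
  In a tree walk every edge is traversed an even number of times, because the steps along an
  edge e are exactly the steps at which the closed walk changes sides of the cut T - e. Hence
  the length is 2 (xi + |E|) with |E| = m - 1.

  For the upper bounds let X be the set of excess edges, so |X| <= xi. Give each vertex v the
  charge d(v) - 2 + x(v) + [d(v) = 1] + [v is the root], where x(v) counts the excess edges at v.
  The kernel conditions make every charge at least 1: a leaf lies on an excess edge, and so does
  a non-root vertex of degree 2. Summing with the handshake lemma for E and for X gives
  m <= 2 |X| + #leaves - 1, and for m > 2 the leaves inject into X (their edges are excess and
  no two leaves share one), so m <= 3 |X| - 1 <= 3 xi - 1. The simple edges number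
  m - 1 - |X| <= 2 |X| - 2 <= 2 xi - 2.

  Both bounds are attained by a comb-shaped walk. Finally, the coefficient of u^s v^j z^l in
  K_xi is nonzero exactly when some kernel walk of excess xi has s simple edges, j = m vertices
  and length 2 l = 2 (xi + m - 1), which turns the bounds into the degrees of K_xi.
*)
theory Submission
  imports Defs
begin

section \<open>Closed walks on trees\<close>

lemma walk_edges_eq_image: "walk_edges W = step_edge W ` {..<length W}"
  unfolding walk_edges_def by auto

lemma finite_walk_edges [simp]: "finite (walk_edges W)"
  unfolding walk_edges_eq_image by simp

lemma step_edge_in_walk_edges: "j < length W \<Longrightarrow> step_edge W j \<in> walk_edges W"
  unfolding walk_edges_def by auto

lemma adj_sym: "(x, y) \<in> adj E \<Longrightarrow> (y, x) \<in> adj E"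
  unfolding adj_def by (auto simp: insert_commute)

lemma rtrancl_adj_sym: "(x, y) \<in> (adj E)\<^sup>* \<Longrightarrow> (y, x) \<in> (adj E)\<^sup>*"
  by (induction rule: rtrancl_induct) (auto dest: adj_sym intro: converse_rtrancl_into_rtrancl)

text \<open>Every vertex other than \<open>a\<close> is charged to the edge to a predecessor on a shortest path
  from \<open>a\<close>; distinct vertices get distinct edges.\<close>
lemma card_le_Suc_card_edges_if_connected:
  assumes "finite V" "finite F" "a \<in> V" and conn: "\<forall>v\<in>V. (a, v) \<in> (adj F)\<^sup>*"
  shows "card V \<le> card F + 1"
proof -
  define dist where "dist v = (LEAST n. (a, v) \<in> adj F ^^ n)" for v
  have "\<exists>u. (u, v) \<in> adj F \<and> dist u < dist v" if v: "v \<in> V" "v \<noteq> a" for v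
  proof -
    have "\<exists>n. (a, v) \<in> adj F ^^ n"
      using conn v rtrancl_power by blast
    then have dv: "(a, v) \<in> adj F ^^ dist v"
      unfolding dist_def by (rule LeastI_ex)
    then obtain k where k: "dist v = Suc k"
      using v by (cases "dist v") auto
    then obtain u where "(a, u) \<in> adj F ^^ k" "(u, v) \<in> adj F"
      using dv by (auto elim: relpow_Suc_E)
    moreover from this have "dist u \<le> k"
      unfolding dist_def by (intro Least_le)
    ultimately show ?thesis
      using k by auto
  qed
  then obtain pred where pred: "\<And>v. v \<in> V - {a} \<Longrightarrow> (pred v, v) \<in> adj F \<and> dist (pred v) < dist v"
    by (metis DiffE insertI1)
  have "inj_on (\<lambda>v. {pred v, v}) (V - {a})"
  proof (rule inj_onI, rule ccontr)
    fix v w assume vw: "v \<in> V - {a}" "w \<in> V - {a}" "{pred v, v} = {pred w, w}" "v \<noteq> w"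
    then have "v = pred w" "w = pred v"
      by (auto simp: doubleton_eq_iff)
    then show False
      using pred[of v] pred[of w] vw(1,2) by simp
  qed
  moreover have "(\<lambda>v. {pred v, v}) ` (V - {a}) \<subseteq> F"
    using pred unfolding adj_def by auto
  ultimately have "card (V - {a}) \<le> card F"
    using \<open>finite F\<close> by (metis card_inj_on_le)
  then show ?thesis
    using assms(1,3) by (simp add: card_Diff_singleton)
qed

lemma sum_card_incident_edges:
  assumes "finite V" "finite F" "\<forall>e\<in>F. e \<subseteq> V \<and> card e = 2"
  shows "(\<Sum>v\<in>V. card {e\<in>F. v \<in> e}) = 2 * card F"
proof -
  have "(\<Sum>v\<in>V. card {e\<in>F. v \<in> e}) = (\<Sum>v\<in>V. \<Sum>e\<in>F. if v \<in> e then 1 else 0)"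
    using assms(2) by (simp flip: sum.inter_filter)
  also have "\<dots> = (\<Sum>e\<in>F. \<Sum>v\<in>V. if v \<in> e then 1 else 0)"
    by (rule sum.swap)
  also have "\<dots> = (\<Sum>e\<in>F. card {v\<in>V. v \<in> e})"
    using assms(1) by (simp flip: sum.inter_filter)
  also have "\<dots> = (\<Sum>e\<in>F. 2)"
    using assms(3) by (intro sum.cong) (auto simp: Collect_conj_eq Int_commute Int_absorb2)
  also have "\<dots> = 2 * card F"
    by simp
  finally show ?thesis .
qed

lemma sum_lessThan_rotate:
  fixes L :: nat
  assumes "L > 0"
  shows "(\<Sum>j<L. f ((j + 1) mod L)) = (\<Sum>j<L. f j)"
proof -
  obtain n where L: "L = Suc n"
    using assms by (cases L) auto
  have "(\<Sum>j<Suc n. f ((j + 1) mod Suc n)) = (\<Sum>j<n. f (Suc j)) + f 0"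
    by (simp add: sum.lessThan_Suc)
  also have "\<dots> = (\<Sum>j<Suc n. f j)"
    by (metis add.commute sum.lessThan_Suc_shift)
  finally show ?thesis
    using L by simp
qed

lemma even_card_cyclic_changes:
  fixes P :: "nat \<Rightarrow> bool"
  assumes "L > 0"
  shows "even (card {j. j < L \<and> P j \<noteq> P ((j + 1) mod L)})"
proof -
  define Q where "Q j = P ((j + 1) mod L)" for j
  have "card {j. j < L \<and> P j \<noteq> Q j} = (\<Sum>j<L. of_bool (P j \<noteq> Q j))"
    by (simp add: sum.If_cases Int_def)
  then have "card {j. j < L \<and> P j \<noteq> Q j} + 2 * (\<Sum>j<L. of_bool (P j \<and> Q j))
      = (\<Sum>j<L. of_bool (P j \<noteq> Q j) + 2 * of_bool (P j \<and> Q j))"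
    by (simp add: sum.distrib sum_distrib_left)
  also have "\<dots> = (\<Sum>j<L. of_bool (P j) + of_bool (Q j))"
    by (intro sum.cong) auto
  also have "\<dots> = (\<Sum>j<L. of_bool (P j)) + (\<Sum>j<L. of_bool (Q j))"
    by (rule sum.distrib)
  also have "(\<Sum>j<L. of_bool (Q j)) = (\<Sum>j<L. of_bool (P j) :: nat)"
    unfolding Q_def by (rule sum_lessThan_rotate[OF assms])
  finally show ?thesis unfolding Q_def
    by (metis (no_types, lifting) even_add mult_2 dvd_triv_left)
qed

lemma is_tree_edge_disconnects:
  assumes tree: "is_tree V E" and e: "{a, b} \<in> E"
  shows "(a, b) \<notin> (adj (E - {{a, b}}))\<^sup>*"
proof
  let ?E' = "E - {{a, b}}"
  assume ab: "(a, b) \<in> (adj ?E')\<^sup>*"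
  have aV: "a \<in> V" and "a \<noteq> b" "b \<in> V"
    using tree e unfolding is_tree_def by (auto simp: doubleton_eq_iff)
  then have "2 \<le> card V"
    using tree card_mono[of V "{a, b}"] unfolding is_tree_def by simp
  then have "finite E"
    using tree unfolding is_tree_def by (auto intro: card_ge_0_finite)
  have "adj E \<subseteq> (adj ?E')\<^sup>*"
  proof clarify
    fix x y assume "(x, y) \<in> adj E"
    then have "{x, y} \<in> E" unfolding adj_def by simp
    then show "(x, y) \<in> (adj ?E')\<^sup>*"
      using ab rtrancl_adj_sym[OF ab] unfolding adj_def
      by (cases "{x, y} = {a, b}") (auto simp: doubleton_eq_iff)
  qed
  then have "(adj E)\<^sup>* \<subseteq> (adj ?E')\<^sup>*"
    by (rule rtrancl_subset_rtrancl)
  then have "\<forall>v\<in>V. (a, v) \<in> (adj ?E')\<^sup>*"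
    using tree aV unfolding is_tree_def by blast
  then have "card V \<le> card ?E' + 1"
    using tree aV \<open>finite E\<close> unfolding is_tree_def
    by (intro card_le_Suc_card_edges_if_connected) auto
  moreover have "card E > 0"
    using e \<open>finite E\<close> by (auto simp: card_gt_0_iff)
  ultimately show False
    using tree e \<open>finite E\<close> unfolding is_tree_def by (simp add: card_Diff_singleton)
qed

lemma even_trav:
  assumes tw: "tree_walk m W" and e: "e \<in> walk_edges W"
  shows "even (trav W e)"
proof -
  let ?E' = "walk_edges W - {e}" and ?next = "\<lambda>j. (j + 1) mod length W"
  have tree: "is_tree {1..m} (walk_edges W)" and "W \<noteq> []"
    using tw unfolding tree_walk_def by auto
  obtain a b where ab: "e = {a, b}"
    using tree e unfolding is_tree_def by blast
  define A where "A = {v. (a, v) \<in> (adj ?E')\<^sup>*}"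
  have "b \<notin> A"
    using is_tree_edge_disconnects[OF tree] e ab unfolding A_def by blast
  have crossing: "step_edge W j = e \<longleftrightarrow> (W ! j \<in> A) \<noteq> (W ! ?next j \<in> A)"
    if "j < length W" for j
  proof (cases "step_edge W j = e")
    case True
    then show ?thesis
      using \<open>b \<notin> A\<close> ab unfolding step_edge_def A_def by (auto simp: doubleton_eq_iff)
  next
    case False
    then have "{W ! j, W ! ?next j} \<in> ?E'"
      using step_edge_in_walk_edges[OF that] unfolding step_edge_def by simp
    then have "(W ! j, W ! ?next j) \<in> adj ?E'" "(W ! ?next j, W ! j) \<in> adj ?E'"
      unfolding adj_def by (auto simp: insert_commute)
    then show ?thesis
      using False unfolding A_def by (auto intro: rtrancl_into_rtrancl)
  qed
  have "trav W e = card {j. j < length W \<and> (W ! j \<in> A) \<noteq> (W ! ?next j \<in> A)}"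
    unfolding trav_def using crossing by metis
  then show ?thesis
    using even_card_cyclic_changes[of "length W" "\<lambda>j. W ! j \<in> A"] \<open>W \<noteq> []\<close> by simp
qed

lemma trav_pos: "e \<in> walk_edges W \<Longrightarrow> trav W e > 0"
  unfolding walk_edges_def trav_def by (auto simp: card_gt_0_iff)

lemma
  assumes "tree_walk m W" "e \<in> walk_edges W"
  shows trav_eq_double_edge_k: "trav W e = 2 * edge_k W e"
    and edge_k_pos: "edge_k W e \<ge> 1"
  using even_trav[OF assms] trav_pos[OF assms(2)] unfolding edge_k_def by auto

lemma length_eq_sum_trav: "length W = (\<Sum>e\<in>walk_edges W. trav W e)"
proof -
  have "{..<length W} = (\<Union>e\<in>walk_edges W. {j. j < length W \<and> step_edge W j = e})"
    unfolding walk_edges_def by auto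
  then have "length W = card (\<Union>e\<in>walk_edges W. {j. j < length W \<and> step_edge W j = e})"
    by (metis card_lessThan)
  also have "\<dots> = (\<Sum>e\<in>walk_edges W. card {j. j < length W \<and> step_edge W j = e})"
    by (rule card_UN_disjoint) auto
  finally show ?thesis
    unfolding trav_def .
qed

lemma length_tree_walk:
  assumes "tree_walk m W"
  shows "length W = 2 * (walk_excess W + card (walk_edges W))"
proof -
  have "walk_excess W + card (walk_edges W) = (\<Sum>e\<in>walk_edges W. edge_k W e - 1 + 1)"
    unfolding walk_excess_def by (simp only: sum.distrib) simp
  also have "\<dots> = (\<Sum>e\<in>walk_edges W. edge_k W e)"
    using edge_k_pos[OF assms] by (intro sum.cong) fastforce+
  finally show ?thesis
    using trav_eq_double_edge_k[OF assms] by (simp add: length_eq_sum_trav sum_distrib_left)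
qed

lemma card_walk_edges: "tree_walk m W \<Longrightarrow> card (walk_edges W) + 1 = m"
  unfolding tree_walk_def is_tree_def by simp

section \<open>Size of kernel walks\<close>

definition excess_edges :: "nat list \<Rightarrow> nat set set" where
  "excess_edges W = {e \<in> walk_edges W. excess_edge W e}"

lemma kernel_walk_imp_tree_walk: "kernel_walk m W \<Longrightarrow> tree_walk m W"
  unfolding kernel_walk_def by simp

lemma finite_excess_edges [simp]: "finite (excess_edges W)"
  unfolding excess_edges_def by simp

lemma card_excess_edges_le_walk_excess: "card (excess_edges W) \<le> walk_excess W"
proof -
  have "card (excess_edges W) = (\<Sum>e\<in>excess_edges W. 1)"
    by simp
  also have "\<dots> \<le> (\<Sum>e\<in>excess_edges W. edge_k W e - 1)"
    by (intro sum_mono) (auto simp: excess_edges_def excess_edge_def)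
  also have "\<dots> \<le> walk_excess W"
    unfolding walk_excess_def by (intro sum_mono2) (auto simp: excess_edges_def)
  finally show ?thesis .
qed

lemma excess_edges_nonempty:
  assumes "walk_excess W \<noteq> 0"
  shows "excess_edges W \<noteq> {}"
proof -
  obtain e where "e \<in> walk_edges W" "edge_k W e - 1 \<noteq> 0"
    using assms unfolding walk_excess_def by (meson sum.neutral)
  then have "e \<in> excess_edges W"
    unfolding excess_edges_def excess_edge_def by simp
  then show ?thesis
    by blast
qed

lemma excess_edge_if_not_simple:
  "tree_walk m W \<Longrightarrow> e \<in> walk_edges W \<Longrightarrow> \<not> simple_edge W e \<Longrightarrow> excess_edge W e"
  using edge_k_pos unfolding simple_edge_def excess_edge_def by fastforce

lemma num_simple_add_card_excess_edges:
  assumes "tree_walk m W"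
  shows "num_simple W + card (excess_edges W) + 1 = m"
proof -
  have "walk_edges W = {e \<in> walk_edges W. simple_edge W e} \<union> excess_edges W"
    using excess_edge_if_not_simple[OF assms] unfolding excess_edges_def by auto
  moreover have "{e \<in> walk_edges W. simple_edge W e} \<inter> excess_edges W = {}"
    unfolding excess_edges_def simple_edge_def excess_edge_def by auto
  ultimately have "card (walk_edges W) = num_simple W + card (excess_edges W)"
    unfolding num_simple_def by (metis card_Un_disjoint finite_excess_edges finite_walk_edges
        finite_Un)
  then show ?thesis
    using card_walk_edges[OF assms] by simp
qed

lemma walk_edge_doubleton:
  "tree_walk m W \<Longrightarrow> e \<in> walk_edges W \<Longrightarrow> \<exists>a b. a \<in> {1..m} \<and> b \<in> {1..m} \<and> a \<noteq> b \<and> e = {a, b}"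
  unfolding tree_walk_def is_tree_def by blast

lemma tree_walk_connected:
  "tree_walk m W \<Longrightarrow> a \<in> {1..m} \<Longrightarrow> b \<in> {1..m} \<Longrightarrow> (a, b) \<in> (adj (walk_edges W))\<^sup>*"
  unfolding tree_walk_def is_tree_def by simp

lemma vdeg_pos:
  assumes "v \<in> set W"
  shows "vdeg W v > 0"
proof -
  obtain j where j: "j < length W" "W ! j = v"
    using assms by (metis in_set_conv_nth)
  then have "step_edge W j \<in> {e \<in> walk_edges W. v \<in> e}"
    using step_edge_in_walk_edges unfolding step_edge_def by auto
  then show ?thesis
    unfolding vdeg_def by (auto simp: card_gt_0_iff)
qed

lemma kernel_walk_leaf_edge_excess:
  assumes kw: "kernel_walk m W" and v: "v \<in> {1..m}" "vdeg W v = 1"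
    and e: "e \<in> walk_edges W" "v \<in> e"
  shows "e \<in> excess_edges W"
proof (cases "v = hd W")
  case True
  then show ?thesis
    using kw v e unfolding kernel_walk_def excess_edges_def by simp
next
  case False
  then have "\<not> simple_edge W e"
    using kw v e unfolding kernel_walk_def by simp
  then show ?thesis
    using kernel_walk_imp_tree_walk[OF kw] e excess_edge_if_not_simple[of m W e]
    unfolding excess_edges_def by simp
qed

lemma kernel_walk_degree_two_excess:
  assumes "kernel_walk m W" "v \<in> {1..m}" "v \<noteq> hd W" "vdeg W v = 2"
  shows "\<exists>e\<in>excess_edges W. v \<in> e"
proof -
  obtain e where "e \<in> walk_edges W" "v \<in> e" "\<not> simple_edge W e"
    using assms unfolding kernel_walk_def by auto
  then show ?thesis
    using kernel_walk_imp_tree_walk[OF assms(1)] excess_edge_if_not_simple[of m W e]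
    unfolding excess_edges_def by auto
qed

text \<open>Two leaves sharing their edge form a connected component, hence the whole tree.\<close>
lemma tree_walk_adjacent_leaves:
  assumes tw: "tree_walk m W" and e: "{v, w} \<in> walk_edges W" "v \<noteq> w"
    and deg: "vdeg W v = 1" "vdeg W w = 1"
  shows "m \<le> 2"
proof -
  have only_edge: "e = {v, w}" if "e \<in> walk_edges W" "x \<in> e" "x \<in> {v, w}" for e x
  proof -
    have "card {e \<in> walk_edges W. x \<in> e} = 1"
      using deg that(3) unfolding vdeg_def by auto
    moreover have "{v, w} \<in> {e \<in> walk_edges W. x \<in> e}" "e \<in> {e \<in> walk_edges W. x \<in> e}"
      using e that by auto
    ultimately show ?thesis
      by (metis card_1_singletonE singletonD)
  qed
  have closed: "c \<in> {v, w}" if "(v, c) \<in> (adj (walk_edges W))\<^sup>*" for c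
    using that
  proof (induction rule: rtrancl_induct)
    case (step y z)
    then show ?case
      using only_edge[of "{y, z}" y] unfolding adj_def by auto
  qed simp
  have "v \<in> {1..m}"
    using walk_edge_doubleton[OF tw e(1)] e(2) by (auto simp: doubleton_eq_iff)
  then have "{1..m} \<subseteq> {v, w}"
    using closed tree_walk_connected[OF tw] by blast
  then have "card {1..m} \<le> card {v, w}"
    by (intro card_mono) auto
  then show ?thesis
    using e(2) by simp
qed

lemma card_leaves_le_card_excess_edges:
  assumes kw: "kernel_walk m W" and "m > 2"
  shows "card {v \<in> {1..m}. vdeg W v = 1} \<le> card (excess_edges W)"
proof -
  let ?leaves = "{v \<in> {1..m}. vdeg W v = 1}"
  have tw: "tree_walk m W"
    using kw by (rule kernel_walk_imp_tree_walk)
  have "\<exists>e. e \<in> walk_edges W \<and> v \<in> e" if "v \<in> ?leaves" for v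
  proof -
    have "{e \<in> walk_edges W. v \<in> e} \<noteq> {}"
      using that unfolding vdeg_def by force
    then show ?thesis
      by blast
  qed
  then obtain edge where edge: "\<And>v. v \<in> ?leaves \<Longrightarrow> edge v \<in> walk_edges W \<and> v \<in> edge v"
    by metis
  have "inj_on edge ?leaves"
  proof (rule inj_onI, rule ccontr)
    fix v w assume vw: "v \<in> ?leaves" "w \<in> ?leaves" "edge v = edge w" "v \<noteq> w"
    then have "edge v = {v, w}"
      using edge[of v] edge[of w] walk_edge_doubleton[OF tw, of "edge v"] by auto
    then show False
      using tree_walk_adjacent_leaves[OF tw, of v w] edge[of v] vw \<open>m > 2\<close> by auto
  qed
  moreover have "edge ` ?leaves \<subseteq> excess_edges W"
    using kernel_walk_leaf_edge_excess[OF kw] edge by blast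
  ultimately show ?thesis
    by (metis card_inj_on_le finite_excess_edges)
qed

lemma kernel_walk_vertex_charge:
  assumes kw: "kernel_walk m W" and v: "v \<in> {1..m}"
  shows "1 \<le> int (vdeg W v) - 2 + int (card {e \<in> excess_edges W. v \<in> e})
              + of_bool (vdeg W v = 1) + of_bool (v = hd W)"
proof -
  have tw: "tree_walk m W"
    using kw by (rule kernel_walk_imp_tree_walk)
  have excess_incident: "card {e \<in> excess_edges W. v \<in> e} \<ge> 1" if "\<exists>e\<in>excess_edges W. v \<in> e"
    using that by (auto simp: Suc_le_eq card_gt_0_iff)
  have "vdeg W v > 0"
    using vdeg_pos[of v W] v tw unfolding tree_walk_def by simp
  then consider "vdeg W v = 1" | "vdeg W v = 2" | "vdeg W v \<ge> 3"
    by linarith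
  then show ?thesis
  proof cases
    case 1
    then obtain e where "e \<in> walk_edges W" "v \<in> e"
      unfolding vdeg_def by (metis (no_types, lifting) card_1_singletonE insertI1 mem_Collect_eq)
    then have "card {e \<in> excess_edges W. v \<in> e} \<ge> 1"
      using excess_incident kernel_walk_leaf_edge_excess[OF kw v 1] by blast
    then show ?thesis
      using 1 by simp
  next
    case 2
    then show ?thesis
      using excess_incident kernel_walk_degree_two_excess[OF kw v _ 2] by (cases "v = hd W") auto
  qed auto
qed

lemma kernel_walk_card_le:
  assumes kw: "kernel_walk m W" and "walk_excess W \<noteq> 0"
  shows "m + 1 \<le> 3 * card (excess_edges W)"
proof (cases "m \<le> 2")
  case True
  have "card (excess_edges W) \<ge> 1"
    using excess_edges_nonempty[OF assms(2)] by (simp add: Suc_le_eq card_gt_0_iff)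
  then show ?thesis
    using True by simp
next
  case False
  let ?V = "{1..m}" and ?X = "excess_edges W"
  have tw: "tree_walk m W"
    using kw by (rule kernel_walk_imp_tree_walk)
  then have "hd W \<in> ?V"
    unfolding tree_walk_def by (metis hd_in_set)
  have edges: "\<forall>e\<in>walk_edges W. e \<subseteq> ?V \<and> card e = 2"
    using walk_edge_doubleton[OF tw] by fastforce
  have degrees: "(\<Sum>v\<in>?V. vdeg W v) = 2 * card (walk_edges W)"
    unfolding vdeg_def using edges by (intro sum_card_incident_edges) auto
  have excess_degrees: "(\<Sum>v\<in>?V. card {e \<in> ?X. v \<in> e}) = 2 * card ?X"
    using edges by (intro sum_card_incident_edges) (auto simp: excess_edges_def)
  have "int m = (\<Sum>v\<in>?V. 1)"
    by simp
  also have "\<dots> \<le> (\<Sum>v\<in>?V. int (vdeg W v) - 2 + int (card {e \<in> ?X. v \<in> e})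
                    + of_bool (vdeg W v = 1) + of_bool (v = hd W))"
    using kernel_walk_vertex_charge[OF kw] by (intro sum_mono) auto
  also have "\<dots> = int (\<Sum>v\<in>?V. vdeg W v) - 2 * int m + int (\<Sum>v\<in>?V. card {e \<in> ?X. v \<in> e})
                    + int (card {v \<in> ?V. vdeg W v = 1}) + 1"
    using \<open>hd W \<in> ?V\<close> by (simp add: sum.distrib sum_subtractf Int_def conj_commute Collect_conv_if)
  finally have "int m \<le> int (2 * card (walk_edges W)) - 2 * int m + int (2 * card ?X)
                    + int (card {v \<in> ?V. vdeg W v = 1}) + 1"
    by (simp only: degrees excess_degrees)
  then show ?thesis
    using card_walk_edges[OF tw] card_leaves_le_card_excess_edges[OF kw] False by linarith
qed

lemma kernel_walk_bounds:
  assumes "kernel_walk m W" "walk_excess W = \<xi>" "\<xi> \<ge> 1"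
  shows "m \<le> 3 * \<xi> - 1" "num_simple W \<le> 2 * \<xi> - 2"
    "m = 3 * \<xi> - 1 \<Longrightarrow> num_simple W = 2 * \<xi> - 2"
proof -
  have "tree_walk m W"
    using assms(1) by (rule kernel_walk_imp_tree_walk)
  then show "m \<le> 3 * \<xi> - 1" "num_simple W \<le> 2 * \<xi> - 2"
    "m = 3 * \<xi> - 1 \<Longrightarrow> num_simple W = 2 * \<xi> - 2"
    using kernel_walk_card_le[OF assms(1)] card_excess_edges_le_walk_excess[of W]
      num_simple_add_card_excess_edges assms(2,3) by fastforce+
qed

section \<open>An extremal kernel walk\<close>

lemma reachable_along_walk:
  "j < length W \<Longrightarrow> (W ! 0, W ! j) \<in> (adj (walk_edges W))\<^sup>*"
proof (induction j)
  case (Suc j)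
  then have "{W ! j, W ! Suc j} \<in> walk_edges W"
    using step_edge_in_walk_edges[of j W] unfolding step_edge_def by simp
  then show ?case
    using Suc unfolding adj_def by (auto intro: rtrancl_into_rtrancl)
qed simp

lemma tree_walkI:
  assumes ne: "W \<noteq> []" and set: "set W = {1..m}"
    and two: "\<forall>e\<in>walk_edges W. card e = 2" and few: "card (walk_edges W) + 1 \<le> m"
  shows "tree_walk m W"
proof -
  have root: "W ! 0 \<in> {1..m}"
    using ne set nth_mem[of 0 W] by simp
  have from_root: "(W ! 0, v) \<in> (adj (walk_edges W))\<^sup>*" if "v \<in> {1..m}" for v
    using that set reachable_along_walk by (metis in_set_conv_nth)
  then have "\<forall>a\<in>{1..m}. \<forall>b\<in>{1..m}. (a, b) \<in> (adj (walk_edges W))\<^sup>*"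
    by (meson rtrancl_adj_sym rtrancl_trans)
  moreover have "\<forall>e\<in>walk_edges W. \<exists>a b. a \<in> {1..m} \<and> b \<in> {1..m} \<and> a \<noteq> b \<and> e = {a, b}"
  proof
    fix e assume e: "e \<in> walk_edges W"
    then obtain j where "j < length W" "e = step_edge W j"
      unfolding walk_edges_def by auto
    moreover have "(j + 1) mod length W < length W"
      using ne by simp
    ultimately show "\<exists>a b. a \<in> {1..m} \<and> b \<in> {1..m} \<and> a \<noteq> b \<and> e = {a, b}"
      using two e set nth_mem unfolding step_edge_def by (metis card_2_iff doubleton_eq_iff)
  qed
  moreover have "m \<le> card (walk_edges W) + 1"
    using card_le_Suc_card_edges_if_connected[OF _ _ root] from_root by simp
  ultimately show ?thesis
    unfolding tree_walk_def is_tree_def using ne set few root by auto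
qed

lemma excess_edgeI:
  assumes tw: "tree_walk m W" and j: "j1 < j2" "j2 < j3" "j3 < length W"
    and e: "step_edge W j1 = e" "step_edge W j2 = e" "step_edge W j3 = e"
  shows "e \<in> excess_edges W"
proof -
  have "e \<in> walk_edges W"
    using e(1) step_edge_in_walk_edges[of j1 W] j by simp
  moreover have "3 \<le> trav W e"
  proof -
    have "{j1, j2, j3} \<subseteq> {j. j < length W \<and> step_edge W j = e}"
      using j e by auto
    then have "card {j1, j2, j3} \<le> trav W e"
      unfolding trav_def by (intro card_mono) auto
    then show ?thesis
      using j by simp
  qed
  ultimately show ?thesis
    using trav_eq_double_edge_k[OF tw] unfolding excess_edges_def excess_edge_def by fastforce
qed

lemma card_le_vdeg:
  "S \<subseteq> walk_edges W \<Longrightarrow> (\<And>e. e \<in> S \<Longrightarrow> v \<in> e) \<Longrightarrow> card S \<le> vdeg W v"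
  unfolding vdeg_def by (intro card_mono) auto

lemma kernel_walkI:
  assumes tw: "tree_walk m W"
    and charge: "\<forall>v\<in>{1..m}. 3 \<le> vdeg W v \<or> (\<exists>e\<in>excess_edges W. v \<in> e)
                                \<or> (v = hd W \<and> 2 \<le> vdeg W v)"
  shows "kernel_walk m W"
proof -
  have leaf_edge: "e \<in> excess_edges W"
    if v: "v \<in> {1..m}" "vdeg W v = 1" and e: "e \<in> walk_edges W" "v \<in> e" for v e
  proof -
    obtain e' where "e' \<in> excess_edges W" "v \<in> e'"
      using charge v by fastforce
    moreover have "card {e \<in> walk_edges W. v \<in> e} = 1"
      using v(2) unfolding vdeg_def .
    ultimately show ?thesis
      using e unfolding excess_edges_def by (metis (mono_tags, lifting) card_1_singletonE
          mem_Collect_eq singletonD)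
  qed
  have "hd W \<in> {1..m}"
    using tw unfolding tree_walk_def by (metis hd_in_set)
  moreover have "\<forall>v\<in>{1..m}. v \<noteq> hd W \<and> vdeg W v = 1 \<longrightarrow>
      (\<forall>e\<in>walk_edges W. v \<in> e \<longrightarrow> \<not> simple_edge W e)"
    using leaf_edge unfolding excess_edges_def excess_edge_def simple_edge_def by fastforce
  moreover have "\<forall>v\<in>{1..m}. v \<noteq> hd W \<and> vdeg W v = 2 \<longrightarrow>
      \<not> (\<forall>e\<in>walk_edges W. v \<in> e \<longrightarrow> simple_edge W e)"
    using charge unfolding excess_edges_def excess_edge_def simple_edge_def by fastforce
  ultimately show ?thesis
    unfolding kernel_walk_def using tw leaf_edge unfolding excess_edges_def by blast
qed

text \<open>The extremal kernel walk of excess \<open>q + 1\<close> on \<open>3q + 2\<close> vertices. Its tree has the spine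
  \<open>1, 4, \<dots>, 3q + 1\<close>, the pendant path \<open>3i + 1, 3i + 2, 3i + 3\<close> at every \<open>i < q\<close> and the
  pendant edge \<open>{3q + 1, 3q + 2}\<close>. For each \<open>i < q\<close> the walk visits
  \<open>3i+1, 3i+2, 3i+3, 3i+2, 3i+3, 3i+2, 3i+1\<close> and moves on to \<open>3i + 4\<close>; at the end of the spine
  it visits \<open>3q+1, 3q+2, 3q+1, 3q+2\<close> and returns along the spine, position \<open>8q + 4\<close> being the
  root again. The \<open>q + 1\<close> edges \<open>{3i + 2, 3i + 3}\<close> and \<open>{3q + 1, 3q + 2}\<close> are traversed four
  times, the other \<open>2q\<close> edges twice.\<close>
definition comb_vertex :: "nat \<Rightarrow> nat \<Rightarrow> nat" where
  "comb_vertex q j =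
     (if j < 7 * q then 3 * (j div 7) + [1, 2, 3, 2, 3, 2, 1] ! (j mod 7)
      else if j < 7 * q + 4 then (if even (j - 7 * q) then 3 * q + 1 else 3 * q + 2)
      else 3 * (8 * q + 4 - j) + 1)"

definition comb_walk :: "nat \<Rightarrow> nat list" where
  "comb_walk q = map (comb_vertex q) [0..<8 * q + 4]"

definition comb_edges :: "nat \<Rightarrow> nat set set" where
  "comb_edges q = (\<lambda>i. {3 * i + 1, 3 * i + 2}) ` {..q} \<union> (\<lambda>i. {3 * i + 2, 3 * i + 3}) ` {..<q}
                  \<union> (\<lambda>i. {3 * i + 1, 3 * i + 4}) ` {..<q}"

lemma comb_vertex_block:
  "i < q \<Longrightarrow> r < 7 \<Longrightarrow> comb_vertex q (7 * i + r) = 3 * i + [1, 2, 3, 2, 3, 2, 1] ! r"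
  unfolding comb_vertex_def by auto

lemma comb_vertex_middle:
  "t \<le> 4 \<Longrightarrow> comb_vertex q (7 * q + t) = (if even t then 3 * q + 1 else 3 * q + 2)"
  unfolding comb_vertex_def by auto

lemma comb_vertex_return: "t \<le> q \<Longrightarrow> comb_vertex q (7 * q + 4 + t) = 3 * (q - t) + 1"
  unfolding comb_vertex_def by auto

lemma comb_vertex_block_exit:
  assumes "i < q"
  shows "comb_vertex q (7 * i + 7) = 3 * i + 4"
proof (cases "i + 1 < q")
  case True
  then show ?thesis
    using comb_vertex_block[of "i + 1" q 0] by (simp add: algebra_simps)
next
  case False
  then have "q = i + 1"
    using assms by simp
  then show ?thesis
    using comb_vertex_middle[of 0 q] by (simp add: add.commute)
qed

lemma comb_vertex_0: "comb_vertex q 0 = 1"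
  unfolding comb_vertex_def by simp

lemma length_comb_walk: "length (comb_walk q) = 8 * q + 4"
  unfolding comb_walk_def by simp

lemma step_edge_comb_walk:
  assumes "j < 8 * q + 4"
  shows "step_edge (comb_walk q) j = {comb_vertex q j, comb_vertex q (j + 1)}"
proof (cases "j + 1 < 8 * q + 4")
  case True
  then show ?thesis
    using assms unfolding step_edge_def comb_walk_def by simp
next
  case False
  then have j: "j + 1 = 8 * q + 4"
    using assms by simp
  have "comb_walk q ! ((j + 1) mod length (comb_walk q)) = comb_vertex q 0"
    unfolding j length_comb_walk by (simp add: comb_walk_def)
  also have "\<dots> = comb_vertex q (j + 1)"
    unfolding j comb_vertex_0 comb_vertex_def by simp
  finally show ?thesis
    using assms unfolding step_edge_def by (simp add: comb_walk_def)
qed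

lemma step_edge_comb_walk_block:
  assumes "i < q" "r < 6"
  shows "step_edge (comb_walk q) (7 * i + r)
           = {3 * i + [1, 2, 3, 2, 3, 2, 1] ! r, 3 * i + [1, 2, 3, 2, 3, 2, 1] ! (r + 1)}"
proof -
  have "7 * i + r + 1 = 7 * i + (r + 1)"
    by simp
  then show ?thesis
    using assms step_edge_comb_walk[of "7 * i + r" q] comb_vertex_block[of i q r]
      comb_vertex_block[of i q "r + 1"] by simp
qed

lemma step_edge_comb_walk_block_exit:
  assumes "i < q"
  shows "step_edge (comb_walk q) (7 * i + 6) = {3 * i + 1, 3 * i + 4}"
proof -
  have "7 * i + 6 + 1 = 7 * i + 7"
    by simp
  then show ?thesis
    using assms step_edge_comb_walk[of "7 * i + 6" q] comb_vertex_block[of i q 6]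
      comb_vertex_block_exit[of i q] by (simp add: add.commute)
qed

lemma step_edge_comb_walk_middle:
  assumes "t < 4"
  shows "step_edge (comb_walk q) (7 * q + t) = {3 * q + 1, 3 * q + 2}"
proof -
  have "7 * q + t + 1 = 7 * q + (t + 1)"
    by simp
  then show ?thesis
    using assms step_edge_comb_walk[of "7 * q + t" q] comb_vertex_middle[of t q]
      comb_vertex_middle[of "t + 1" q] by (auto simp: insert_commute)
qed

lemma step_edge_comb_walk_return:
  assumes "t < q"
  shows "step_edge (comb_walk q) (7 * q + 4 + t) = {3 * (q - t - 1) + 1, 3 * (q - t - 1) + 4}"
proof -
  have "7 * q + 4 + t + 1 = 7 * q + 4 + (t + 1)"
    by simp
  moreover have "3 * (q - t) + 1 = 3 * (q - t - 1) + 4"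
    using assms by simp
  ultimately show ?thesis
    using assms step_edge_comb_walk[of "7 * q + 4 + t" q] comb_vertex_return[of t q]
      comb_vertex_return[of "t + 1" q] by (simp add: insert_commute add.commute)
qed

lemma comb_edgesI:
  "i \<le> q \<Longrightarrow> {3 * i + 1, 3 * i + 2} \<in> comb_edges q"
  "i < q \<Longrightarrow> {3 * i + 2, 3 * i + 3} \<in> comb_edges q"
  "i < q \<Longrightarrow> {3 * i + 1, 3 * i + 4} \<in> comb_edges q"
  unfolding comb_edges_def by blast+

lemma walk_edges_comb_walk: "walk_edges (comb_walk q) \<subseteq> comb_edges q"
proof
  fix e assume "e \<in> walk_edges (comb_walk q)"
  then obtain j where j: "j < 8 * q + 4" "e = step_edge (comb_walk q) j"
    unfolding walk_edges_def length_comb_walk by blast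
  consider (block) i r where "i < q" "r < 6" "j = 7 * i + r"
    | (exit) i where "i < q" "j = 7 * i + 6"
    | (middle) t where "t < 4" "j = 7 * q + t"
    | (return) t where "t < q" "j = 7 * q + 4 + t"
  proof (cases "j < 7 * q")
    case True
    define i r where "i = j div 7" and "r = j mod 7"
    then have "j = 7 * i + r" "r < 7" "i < q"
      using True by auto
    then show ?thesis
      using block[of i r] exit[of i] by (cases "r = 6") auto
  next
    case False
    then show ?thesis
      using j middle[of "j - 7 * q"] return[of "j - 7 * q - 4"] by (cases "j < 7 * q + 4") auto
  qed
  then show "e \<in> comb_edges q"
  proof cases
    case block
    then have "r = 0 \<or> r = 1 \<or> r = 2 \<or> r = 3 \<or> r = 4 \<or> r = 5"
      by linarith
    then show ?thesis
      using j block step_edge_comb_walk_block[of i q r] comb_edgesI[of i q]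
      by (elim disjE) (simp_all add: insert_commute)
  next
    case exit
    then show ?thesis
      using j step_edge_comb_walk_block_exit comb_edgesI(3) by simp
  next
    case middle
    then show ?thesis
      using j step_edge_comb_walk_middle comb_edgesI(1)[of q q] by simp
  next
    case return
    then show ?thesis
      using j step_edge_comb_walk_return comb_edgesI(3)[of "q - t - 1" q] by simp
  qed
qed

lemma card_comb_edges: "card (comb_edges q) \<le> 3 * q + 1"
proof -
  have "card (comb_edges q) \<le> card ((\<lambda>i. {3 * i + 1, 3 * i + 2}) ` {..q})
      + card ((\<lambda>i. {3 * i + 2, 3 * i + 3}) ` {..<q}) + card ((\<lambda>i. {3 * i + 1, 3 * i + 4}) ` {..<q})"
    unfolding comb_edges_def by (meson add_mono card_Un_le le_trans order_refl)
  also have "\<dots> \<le> card {..q} + card {..<q} + card {..<q}"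
    by (intro add_mono card_image_le) auto
  finally show ?thesis
    by simp
qed

lemma comb_edge_subset: "e \<in> comb_edges q \<Longrightarrow> e \<subseteq> {1..3 * q + 2} \<and> card e = 2"
  unfolding comb_edges_def by auto

lemma set_comb_walk: "set (comb_walk q) = {1..3 * q + 2}"
proof
  show "set (comb_walk q) \<subseteq> {1..3 * q + 2}"
  proof
    fix v assume "v \<in> set (comb_walk q)"
    then obtain j where j: "j < length (comb_walk q)" "comb_walk q ! j = v"
      by (metis in_set_conv_nth)
    then have "v \<in> step_edge (comb_walk q) j"
      unfolding step_edge_def by simp
    then show "v \<in> {1..3 * q + 2}"
      using j(1) step_edge_in_walk_edges walk_edges_comb_walk comb_edge_subset by blast
  qed
next
  have visited: "comb_vertex q j \<in> set (comb_walk q)" if "j < 8 * q + 4" for j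
    using that unfolding comb_walk_def by simp
  show "{1..3 * q + 2} \<subseteq> set (comb_walk q)"
  proof
    fix v assume v: "v \<in> {1..3 * q + 2}"
    show "v \<in> set (comb_walk q)"
    proof (cases "v \<le> 3 * q")
      case True
      define i r where "i = (v - 1) div 3" and "r = (v - 1) mod 3"
      then have "v = 3 * i + r + 1" "r < 3" "i < q"
        using v True by auto
      then have "comb_vertex q (7 * i + r) = v"
        using comb_vertex_block[of i q r] by (auto simp: less_Suc_eq numeral_eq_Suc)
      then show ?thesis
        using visited[of "7 * i + r"] \<open>r < 3\<close> \<open>i < q\<close> by simp
    next
      case False
      then have "v = comb_vertex q (7 * q) \<or> v = comb_vertex q (7 * q + 1)"
        using v comb_vertex_middle[of 0 q] comb_vertex_middle[of 1 q] by auto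
      then show ?thesis
        using visited[of "7 * q"] visited[of "7 * q + 1"] by auto
    qed
  qed
qed

lemma tree_walk_comb_walk: "tree_walk (3 * q + 2) (comb_walk q)"
proof (rule tree_walkI)
  show "comb_walk q \<noteq> []"
    using length_comb_walk[of q] by auto
  show "set (comb_walk q) = {1..3 * q + 2}"
    by (rule set_comb_walk)
  show "\<forall>e\<in>walk_edges (comb_walk q). card e = 2"
    using walk_edges_comb_walk comb_edge_subset by blast
  have "card (walk_edges (comb_walk q)) \<le> card (comb_edges q)"
    by (intro card_mono walk_edges_comb_walk) (simp add: comb_edges_def)
  then show "card (walk_edges (comb_walk q)) + 1 \<le> 3 * q + 2"
    using card_comb_edges[of q] by simp
qed

lemma walk_excess_comb_walk: "walk_excess (comb_walk q) = q + 1"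
  using length_tree_walk[OF tree_walk_comb_walk] card_walk_edges[OF tree_walk_comb_walk]
    length_comb_walk[of q] by simp

lemma comb_walk_excess_edges:
  "i < q \<Longrightarrow> {3 * i + 2, 3 * i + 3} \<in> excess_edges (comb_walk q)"
  "{3 * q + 1, 3 * q + 2} \<in> excess_edges (comb_walk q)"
proof -
  assume "i < q"
  then show "{3 * i + 2, 3 * i + 3} \<in> excess_edges (comb_walk q)"
    using step_edge_comb_walk_block[of i q 1] step_edge_comb_walk_block[of i q 2]
      step_edge_comb_walk_block[of i q 3] length_comb_walk[of q]
    by (intro excess_edgeI[OF tree_walk_comb_walk, of "7 * i + 1" "7 * i + 2" "7 * i + 3"])
      (auto simp: insert_commute)
next
  show "{3 * q + 1, 3 * q + 2} \<in> excess_edges (comb_walk q)"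
    using step_edge_comb_walk_middle[of 0 q] step_edge_comb_walk_middle[of 1 q]
      step_edge_comb_walk_middle[of 2 q] length_comb_walk[of q]
    by (intro excess_edgeI[OF tree_walk_comb_walk, of "7 * q" "7 * q + 1" "7 * q + 2"]) auto
qed

lemma vdeg_comb_walk_spine:
  assumes "i < q"
  shows "2 \<le> vdeg (comb_walk q) (3 * i + 1)"
    and "0 < i \<Longrightarrow> 3 \<le> vdeg (comb_walk q) (3 * i + 1)"
proof -
  let ?W = "comb_walk q"
  have down: "{3 * i + 1, 3 * i + 2} \<in> walk_edges ?W"
    using assms step_edge_comb_walk_block[of i q 0] step_edge_in_walk_edges[of "7 * i" ?W]
      length_comb_walk[of q] by simp
  have right: "{3 * i + 1, 3 * i + 4} \<in> walk_edges ?W"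
    using assms step_edge_comb_walk_block_exit[of i q] step_edge_in_walk_edges[of "7 * i + 6" ?W]
      length_comb_walk[of q] by simp
  have "card {{3 * i + 1, 3 * i + 2}, {3 * i + 1, 3 * i + 4}} \<le> vdeg ?W (3 * i + 1)"
    using down right by (intro card_le_vdeg) auto
  then show "2 \<le> vdeg ?W (3 * i + 1)"
    by (simp add: doubleton_eq_iff)
  assume "0 < i"
  then have shift: "3 * (i - 1) + 4 = 3 * i + 1"
    by simp
  have "7 * (i - 1) + 6 < length ?W"
    using assms length_comb_walk[of q] by simp
  then have "step_edge ?W (7 * (i - 1) + 6) \<in> walk_edges ?W"
    by (rule step_edge_in_walk_edges)
  then have "{3 * (i - 1) + 1, 3 * i + 1} \<in> walk_edges ?W"
    using assms step_edge_comb_walk_block_exit[of "i - 1" q] unfolding shift by simp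
  then have "card {{3 * i + 1, 3 * i + 2}, {3 * i + 1, 3 * i + 4}, {3 * (i - 1) + 1, 3 * i + 1}}
      \<le> vdeg ?W (3 * i + 1)"
    using down right by (intro card_le_vdeg) auto
  then show "3 \<le> vdeg ?W (3 * i + 1)"
    using \<open>0 < i\<close> by (simp add: doubleton_eq_iff)
qed

lemma hd_comb_walk: "hd (comb_walk q) = 1"
  unfolding comb_walk_def using comb_vertex_0 by (simp add: hd_map upt_rec)

lemma kernel_walk_comb_walk: "kernel_walk (3 * q + 2) (comb_walk q)"
proof (rule kernel_walkI[OF tree_walk_comb_walk], intro ballI)
  fix v assume v: "v \<in> {1..3 * q + 2}"
  let ?W = "comb_walk q"
  show "3 \<le> vdeg ?W v \<or> (\<exists>e\<in>excess_edges ?W. v \<in> e) \<or> (v = hd ?W \<and> 2 \<le> vdeg ?W v)"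
  proof (cases "v \<le> 3 * q")
    case True
    define i r where "i = (v - 1) div 3" and "r = (v - 1) mod 3"
    then have ir: "v = 3 * i + r + 1" "r < 3" "i < q"
      using v True by auto
    consider "r = 0" "i = 0" | "r = 0" "0 < i" | "r = 1 \<or> r = 2"
      using ir by linarith
    then show ?thesis
    proof cases
      case 1
      then show ?thesis
        using ir vdeg_comb_walk_spine(1)[of i q] hd_comb_walk[of q] by simp
    next
      case 2
      then show ?thesis
        using ir vdeg_comb_walk_spine(2)[of i q] by simp
    next
      case 3
      then have "v \<in> {3 * i + 2, 3 * i + 3}"
        using ir by auto
      then show ?thesis
        using comb_walk_excess_edges(1)[OF ir(3)] by blast
    qed
  next
    case False
    then have "v \<in> {3 * q + 1, 3 * q + 2}"
      using v by auto
    then show ?thesis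
      using comb_walk_excess_edges(2)[of q] by blast
  qed
qed

lemma comb_walk_extremal:
  assumes "\<xi> \<ge> 1"
  shows "kernel_walk (3 * \<xi> - 1) (comb_walk (\<xi> - 1))" "walk_excess (comb_walk (\<xi> - 1)) = \<xi>"
proof -
  have "3 * (\<xi> - 1) + 2 = 3 * \<xi> - 1" "\<xi> - 1 + 1 = \<xi>"
    using assms by simp_all
  then show "kernel_walk (3 * \<xi> - 1) (comb_walk (\<xi> - 1))" "walk_excess (comb_walk (\<xi> - 1)) = \<xi>"
    using kernel_walk_comb_walk[of "\<xi> - 1"] walk_excess_comb_walk[of "\<xi> - 1"] by simp_all
qed

section \<open>The support of the generating function\<close>

lemma finite_tree_walks_of_length: "finite {W. (\<exists>m. tree_walk m W) \<and> length W = n}"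
proof (rule finite_subset)
  have "set W \<subseteq> {1..length W}" if "tree_walk m W" for m W
  proof -
    have "m = card (set W)"
      using that unfolding tree_walk_def by simp
    also have "\<dots> \<le> length W"
      by (rule card_length)
    finally show ?thesis
      using that unfolding tree_walk_def by auto
  qed
  then show "{W. (\<exists>m. tree_walk m W) \<and> length W = n} \<subseteq> {W. set W \<subseteq> {1..n} \<and> length W = n}"
    by blast
  show "finite {W. set W \<subseteq> {1..n} \<and> length W = n}"
    by (rule finite_lists_length_eq) simp
qed

lemma length_kernel_walk:
  assumes "kernel_walk m W"
  shows "length W = 2 * (walk_excess W + m - 1)" "m \<ge> 1"
  using length_tree_walk card_walk_edges kernel_walk_imp_tree_walk[OF assms] by fastforce+

lemma mem_K_support:
  "(s, j, l) \<in> K_support \<xi> \<longleftrightarrow>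
     (\<exists>m W. kernel_walk m W \<and> walk_excess W = \<xi> \<and> num_simple W = s \<and> j = m \<and> l = \<xi> + m - 1)"
proof -
  let ?walks = "{W. (\<exists>m. kernel_walk m W) \<and> length W = 2 * l \<and> walk_excess W = \<xi> \<and> num_simple W = s}"
  have "finite ?walks"
    by (rule finite_subset[OF _ finite_tree_walks_of_length[of "2 * l"]])
      (auto dest: kernel_walk_imp_tree_walk)
  then have "kcount \<xi> s l \<noteq> 0 \<longleftrightarrow> ?walks \<noteq> {}"
    unfolding kcount_def by simp
  then have "(s, j, l) \<in> K_support \<xi> \<longleftrightarrow> j + \<xi> = l + 1 \<and> ?walks \<noteq> {}"
    unfolding K_support_def K_coeff_def by simp
  also have "\<dots> \<longleftrightarrow> (\<exists>m W. kernel_walk m W \<and> walk_excess W = \<xi> \<and> num_simple W = s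
                          \<and> j = m \<and> l = \<xi> + m - 1)" (is "_ \<longleftrightarrow> ?rhs")
  proof
    assume "j + \<xi> = l + 1 \<and> ?walks \<noteq> {}"
    then obtain m W where W: "kernel_walk m W" "length W = 2 * l" "walk_excess W = \<xi>"
      "num_simple W = s" and "j + \<xi> = l + 1"
      by blast
    moreover have "l = \<xi> + m - 1" "m \<ge> 1"
      using length_kernel_walk[OF W(1)] W(2,3) by simp_all
    ultimately show ?rhs
      by auto
  next
    assume ?rhs
    then obtain m W where W: "kernel_walk m W" "walk_excess W = \<xi>" "num_simple W = s"
      and jl: "j = m" "l = \<xi> + m - 1"
      by blast
    then have "W \<in> ?walks"
      using length_kernel_walk[OF W(1)] by auto
    moreover have "j + \<xi> = l + 1"
      using length_kernel_walk(2)[OF W(1)] jl by simp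
    ultimately show "j + \<xi> = l + 1 \<and> ?walks \<noteq> {}"
      by blast
  qed
  finally show ?thesis .
qed

theorem lemma2:
  fixes \<xi> :: nat
  assumes "\<xi> \<ge> 1"
  shows "(\<forall>m W. kernel_walk m W \<and> walk_excess W = \<xi> \<longrightarrow>
            card {1..m} \<le> 3 * \<xi> - 1 \<and> num_simple W \<le> 2 * \<xi> - 2)
       \<and> (\<exists>m W. kernel_walk m W \<and> walk_excess W = \<xi> \<and> card {1..m} = 3 * \<xi> - 1)
       \<and> (\<exists>m W. kernel_walk m W \<and> walk_excess W = \<xi> \<and> num_simple W = 2 * \<xi> - 2)
       \<and> finite (K_support \<xi>)
       \<and> Max ((\<lambda>(s, j, l). s) ` K_support \<xi>) = 2 * \<xi> - 2
       \<and> Max ((\<lambda>(s, j, l). j) ` K_support \<xi>) = 3 * \<xi> - 1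
       \<and> Max ((\<lambda>(s, j, l). l) ` K_support \<xi>) = 4 * \<xi> - 2"
proof -
  let ?W = "comb_walk (\<xi> - 1)" and ?top = "(2 * \<xi> - 2, 3 * \<xi> - 1, 4 * \<xi> - 2)"
  note W = comb_walk_extremal[OF assms]
  then have simple: "num_simple ?W = 2 * \<xi> - 2"
    using kernel_walk_bounds(3) assms by blast
  have "?top \<in> K_support \<xi>"
    using W simple assms unfolding mem_K_support by (intro exI[of _ "3 * \<xi> - 1"] exI[of _ ?W]) simp
  moreover have dominated: "K_support \<xi> \<subseteq> {..2 * \<xi> - 2} \<times> {..3 * \<xi> - 1} \<times> {..4 * \<xi> - 2}"
    using kernel_walk_bounds(1,2) assms by (fastforce simp: mem_K_support)
  moreover have "finite (K_support \<xi>)"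
    using dominated by (rule finite_subset) simp
  ultimately have "Max (f ` K_support \<xi>) = f ?top"
    if "\<And>s j l. s \<le> 2 * \<xi> - 2 \<Longrightarrow> j \<le> 3 * \<xi> - 1 \<Longrightarrow> l \<le> 4 * \<xi> - 2 \<Longrightarrow> f (s, j, l) \<le> f ?top"
    for f :: "nat \<times> nat \<times> nat \<Rightarrow> nat"
    using that by (intro Max_eqI) auto
  then show ?thesis
    using kernel_walk_bounds(1,2) assms W simple \<open>finite (K_support \<xi>)\<close> by fastforce
qed

end
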